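(* Let $G\subseteq W(\mathsf D_n)$ be a group satisfying the (H1), relative minimality and minimality conditions, let $O$ be an orbit of $pr(G)$ on $\{1,\dots,n\}$ of size $n'$, with indices labelled so that $O=\{1,\dots,n'\}$. For $g\in G$ let $g_O$ denote the product of those signed permutation cycles of $g$ whose underlying cycles lie in $O$, and define $P_O(g)=g_Oc_{n'+1}$ if $\sigma(g_O)=-1$ and $P_O(g)=g_O$ if $\sigma(g_O)=1$. Then $\overline G_O=\{P_O(g): g\in G\}$ is a group and $P_O:G\to\overline G_O$ is a group homomorphism.
   Context: $W(\mathsf B_m)$ is the group of signed permutations of the symbols $j^\pm$ ($1\le j\le m$), generated by $\mathfrak S_m$ and involutions $c_j$ exchanging $j^\pm$; elements are $c_{j_1}\cdots c_{j_t}\tau$; $pr(c_{j_1}\cdots c_{j_t}\tau)=\tau$; $\sigma(c_{j_1}\cdots c_{j_t}\tau)=(-1)^t$; $W(\mathsf D_m)=\ker\sigma$. Signed permutation cycles of $g$: for each cycle $\gamma$ of $\tau$ (fixed points included), $\beta_\gamma=(\prod_{j_i\in\mathrm{supp}\,\gamma}c_{j_i})\gamma$. $W(\mathsf D_n)$ acts on $\mathrm{Pic}(\bar X)=\bigoplus_{i=-1}^n\mathbb Zl_i$ by: for $g=c_{j_1}\cdots c_{j_t}\tau$ with $s(i)=-1$ iff $i\in\{j_1,\dots,j_t\}$, $\Phi(g)l_0=l_0$, $\Phi(g)l_{-1}=l_{-1}+\frac t2l_0-\sum_{s(i)=-1}l_i$, $\Phi(g)l_v=l_u$ or $l_0-l_u$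 ($u=\tau^{-1}(v)$) according as $s(u)=1$ or $-1$. (H1): $\mathrm H^1(H,\mathrm{Pic}(\bar X))=0$ for all subgroups $H\subseteq G$. Relative minimality: $\mathrm{Pic}(\bar X)^G=\mathbb Zl_0\oplus\mathbb ZK$ with $K=-2(l_{-1}+l_0)+\sum_{i=1}^nl_i$. Minimality: $G$ corresponds to a $k$-minimal conic bundle; in particular, for each $j$, $j^+$ and $j^-$ lie in the same $G$-orbit. $\overline G_O$ is regarded inside $W(\mathsf D_{n'+1})$ (or $W(\mathsf D_{n'})$ if no $c_{n'+1}$ occurs). *)

theory Defs
  imports Main
begin

text \<open>Signed permutations of the symbols j+ and j- (1 \<le> j \<le> m) are encoded as
  odd bijections of the integers: the symbol j+ is the integer j, the symbol j- is -j.  An element c_{j1} ... c_{jt} tau of the paper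
  (product read left to right: first the c's, then tau) is the function
  f = tau o c_S with S = {j1,...,jt}; hence tau j = |f j| and S = {j > 0. f j < 0}.\<close>

definition W_B :: "nat \<Rightarrow> (int \<Rightarrow> int) set" where
  "W_B m = {f. bij f \<and> (\<forall>x. f (- x) = - f x) \<and> (\<forall>x. x \<notin> {- int m .. int m} \<longrightarrow> f x = x)}"

definition neg_set :: "(int \<Rightarrow> int) \<Rightarrow> int set" where
  "neg_set f = {j. 0 < j \<and> f j < 0}"

definition sp_sigma :: "(int \<Rightarrow> int) \<Rightarrow> int" where
  "sp_sigma f = (-1) ^ card (neg_set f)"

definition W_D :: "nat \<Rightarrow> (int \<Rightarrow> int) set" where
  "W_D m = {f \<in> W_B m. sp_sigma f = 1}"

definition pr :: "(int \<Rightarrow> int) \<Rightarrow> int \<Rightarrow> int" where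
  "pr f = (\<lambda>j. \<bar>f j\<bar>)"

definition c :: "int \<Rightarrow> int \<Rightarrow> int" where
  "c j = (\<lambda>x. if x = j then - j else if x = - j then j else x)"

definition group_of_funs :: "(int \<Rightarrow> int) set \<Rightarrow> bool" where
  "group_of_funs H \<longleftrightarrow> id \<in> H \<and> (\<forall>f\<in>H. \<forall>g\<in>H. f \<circ> g \<in> H) \<and> (\<forall>f\<in>H. inv f \<in> H)"

text \<open>Pic(X) = direct sum of Z l_i, i = -1..n, as coefficient functions.\<close>
definition Pic :: "nat \<Rightarrow> (int \<Rightarrow> int) set" where
  "Pic n = {x. \<forall>i. (i < -1 \<or> i > int n) \<longrightarrow> x i = 0}"

text \<open>The action Phi(g) on coefficient vectors, obtained by linearity from
  Phi(g) l_0 = l_0, Phi(g) l_{-1} = l_{-1} + t/2 l_0 - sum_{i in S} l_i,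
  Phi(g) l_v = l_u or l_0 - l_u with u = tau^{-1} v according as u \<notin> S or u \<in> S.\<close>
definition Phi :: "nat \<Rightarrow> (int \<Rightarrow> int) \<Rightarrow> (int \<Rightarrow> int) \<Rightarrow> (int \<Rightarrow> int)" where
  "Phi n f x = (\<lambda>i.
     if i = -1 then x (-1)
     else if i = 0 then x 0 + x (-1) * (int (card (neg_set f)) div 2)
                        + (\<Sum>u\<in>neg_set f. x \<bar>f u\<bar>)
     else if 1 \<le> i \<and> i \<le> int n then
       (if f i > 0 then x (f i) else - x (- f i) - x (-1))
     else 0)"

text \<open>(H1): H^1(H, Pic) = 0 for all subgroups H of G.  The paper's product gh
  (first g, then h) is the composition h \<circ> g; Phi is a homomorphism for it, so a
  crossed homomorphism satisfies a(gh) = a(g) + Phi(g) a(h).\<close>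
definition H1_condition :: "nat \<Rightarrow> (int \<Rightarrow> int) set \<Rightarrow> bool" where
  "H1_condition n G \<longleftrightarrow>
     (\<forall>H. H \<subseteq> G \<and> group_of_funs H \<longrightarrow>
        (\<forall>a :: (int \<Rightarrow> int) \<Rightarrow> (int \<Rightarrow> int).
           (\<forall>g\<in>H. a g \<in> Pic n) \<and>
           (\<forall>g\<in>H. \<forall>h\<in>H. a (h \<circ> g) = (\<lambda>i. a g i + Phi n g (a h) i))
           \<longrightarrow> (\<exists>m\<in>Pic n. \<forall>g\<in>H. a g = (\<lambda>i. Phi n g m i - m i))))"

definition l0 :: "int \<Rightarrow> int" where
  "l0 = (\<lambda>i. if i = 0 then 1 else 0)"

definition Kcan :: "nat \<Rightarrow> int \<Rightarrow> int" where
  "Kcan n = (\<lambda>i. if i = -1 \<or> i = 0 then -2 else if 1 \<le> i \<and> i \<le> int n then 1 else 0)"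

definition relatively_minimal :: "nat \<Rightarrow> (int \<Rightarrow> int) set \<Rightarrow> bool" where
  "relatively_minimal n G \<longleftrightarrow>
     {x \<in> Pic n. \<forall>g\<in>G. Phi n g x = x} = {(\<lambda>i. a * l0 i + b * Kcan n i) | a b. True}"

text \<open>Combinatorial consequence of k-minimality stated in the paper: for each j,
  j+ and j- lie in the same G-orbit.\<close>
definition minimality_condition :: "nat \<Rightarrow> (int \<Rightarrow> int) set \<Rightarrow> bool" where
  "minimality_condition n G \<longleftrightarrow> (\<forall>j \<in> {1 .. int n}. \<exists>g\<in>G. g j = - j)"

definition tau_cycle :: "(int \<Rightarrow> int) \<Rightarrow> int \<Rightarrow> int set" where
  "tau_cycle g j = {(pr g ^^ k) j | k. True}"

definition g_O :: "int set \<Rightarrow> (int \<Rightarrow> int) \<Rightarrow> (int \<Rightarrow> int)" where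
  "g_O Orb g = (\<lambda>x. if tau_cycle g \<bar>x\<bar> \<subseteq> Orb then g x else x)"

definition P_O :: "nat \<Rightarrow> (int \<Rightarrow> int) \<Rightarrow> (int \<Rightarrow> int)" where
  "P_O n' g = (let h = g_O {1 .. int n'} g in
                 if sp_sigma h = -1 then c (int n' + 1) \<circ> h else h)"

end

theory Submission
  imports Defs
begin

text \<open>Since O is a pr(G)-orbit, every g \<in> G permutes the symbols j+, j- with j \<in> O among
  themselves. Hence the cycles of pr(g) lying in O are exactly those meeting O, and g_O is
  just g restricted to these symbols; restriction to an invariant set is multiplicative.
  The sign sigma is a character of the signed permutation group, and c_{n'+1} commutes with
  every signed permutation supported on 1..n', so correcting the odd restrictions by c_{n'+1}
  is a homomorphism into W(D_{n'+1}); its image is therefore a group.\<close>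

definition signed_perm :: "(int \<Rightarrow> int) \<Rightarrow> bool" where
  "signed_perm f \<longleftrightarrow> bij f \<and> (\<forall>x. f (- x) = - f x)"

lemma signed_perm_odd: "signed_perm f \<Longrightarrow> f (- x) = - f x"
  by (simp add: signed_perm_def)

lemma signed_perm_zero: "signed_perm f \<Longrightarrow> f 0 = 0"
  using signed_perm_odd[of f 0] by simp

lemma signed_perm_nonzero: "signed_perm f \<Longrightarrow> x \<noteq> 0 \<Longrightarrow> f x \<noteq> 0"
  by (metis bij_is_inj injD signed_perm_def signed_perm_zero)

lemma signed_perm_comp: "signed_perm f \<Longrightarrow> signed_perm h \<Longrightarrow> signed_perm (f \<circ> h)"
  by (simp add: signed_perm_def bij_comp)

lemma W_B_iff: "f \<in> W_B m \<longleftrightarrow> signed_perm f \<and> (\<forall>x. int m < \<bar>x\<bar> \<longrightarrow> f x = x)"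
proof -
  have "x \<notin> {- int m .. int m} \<longleftrightarrow> int m < \<bar>x\<bar>" for x
    by auto
  then show ?thesis
    unfolding W_B_def signed_perm_def by auto
qed

lemma W_B_comp: "f \<in> W_B m \<Longrightarrow> h \<in> W_B m \<Longrightarrow> f \<circ> h \<in> W_B m"
  by (simp add: W_B_iff signed_perm_comp)

lemma W_B_mono: "m \<le> m' \<Longrightarrow> W_B m \<subseteq> W_B m'"
  by (auto simp: W_B_iff)

lemma finite_neg_set_W_B:
  assumes "f \<in> W_B m"
  shows "finite (neg_set f)"
proof -
  have "neg_set f \<subseteq> {1 .. int m}"
  proof
    fix j assume "j \<in> neg_set f"
    then have "0 < j" "f j < 0"
      by (auto simp: neg_set_def)
    moreover have "f j = j" if "int m < j"
      using assms that \<open>0 < j\<close> by (auto simp: W_B_iff)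
    ultimately show "j \<in> {1 .. int m}"
      by force
  qed
  then show ?thesis
    using finite_subset by blast
qed

lemma neg_one_power_card_sym_diff:
  assumes "finite A" "finite B"
  shows "(-1::int) ^ card (sym_diff A B) = (-1) ^ card A * (-1) ^ card B"
proof -
  have "card A = card (A \<inter> B) + card (A - B)" "card B = card (A \<inter> B) + card (B - A)"
    using assms card_Int_Diff[of A B] card_Int_Diff[of B A] by (auto simp: Int_commute)
  moreover have "card (sym_diff A B) = card (A - B) + card (B - A)"
    using assms by (intro card_Un_disjoint) auto
  ultimately have "card A + card B = card (sym_diff A B) + 2 * card (A \<inter> B)"
    by simp
  then have "(-1::int) ^ card A * (-1) ^ card B
      = (-1) ^ (card (sym_diff A B) + 2 * card (A \<inter> B))"
    by (simp flip: power_add)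
  then show ?thesis
    by (simp add: power_add power_mult)
qed

lemma neg_set_comp:
  assumes "signed_perm f" "signed_perm h"
  shows "neg_set (f \<circ> h) = sym_diff (neg_set h) {j. 0 < j \<and> \<bar>h j\<bar> \<in> neg_set f}"
proof (rule set_eqI)
  fix j :: int
  show "j \<in> neg_set (f \<circ> h) \<longleftrightarrow> j \<in> sym_diff (neg_set h) {j. 0 < j \<and> \<bar>h j\<bar> \<in> neg_set f}"
  proof (cases "0 < j")
    case True
    then have "h j \<noteq> 0" "f (h j) \<noteq> 0" "f (- h j) = - f (h j)"
      using assms signed_perm_nonzero signed_perm_odd by auto
    then show ?thesis
      using True by (cases "0 < h j") (auto simp: neg_set_def)
  qed (simp add: neg_set_def)
qed

lemma bij_betw_abs_preimage:
  assumes "signed_perm h" "B \<subseteq> {0<..}"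
  shows "bij_betw (\<lambda>j. \<bar>h j\<bar>) {j. 0 < j \<and> \<bar>h j\<bar> \<in> B} B"
proof (rule bij_betwI')
  fix x y assume "x \<in> {j. 0 < j \<and> \<bar>h j\<bar> \<in> B}" "y \<in> {j. 0 < j \<and> \<bar>h j\<bar> \<in> B}"
  then have "0 < x" "0 < y"
    by auto
  have "inj h"
    using assms(1) by (simp add: signed_perm_def bij_is_inj)
  show "(\<bar>h x\<bar> = \<bar>h y\<bar>) = (x = y)"
  proof
    assume "\<bar>h x\<bar> = \<bar>h y\<bar>"
    then have "h x = h y \<or> h x = h (- y)"
      using assms(1) by (auto simp: signed_perm_odd abs_eq_iff)
    then have "x = y \<or> x = - y"
      using \<open>inj h\<close> by (auto dest: injD)
    then show "x = y"
      using \<open>0 < x\<close> \<open>0 < y\<close> by auto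
  qed simp
next
  fix b assume b: "b \<in> B"
  then obtain y where y: "h y = b"
    using assms(1) by (metis bij_pointE signed_perm_def)
  then have "y \<noteq> 0"
    using b assms signed_perm_zero by force
  then show "\<exists>x \<in> {j. 0 < j \<and> \<bar>h j\<bar> \<in> B}. b = \<bar>h x\<bar>"
    using y b assms by (intro bexI[of _ "\<bar>y\<bar>"]) (auto simp: abs_if signed_perm_odd)
qed auto

lemma sp_sigma_comp:
  assumes "signed_perm f" "signed_perm h" "finite (neg_set f)" "finite (neg_set h)"
  shows "sp_sigma (f \<circ> h) = sp_sigma f * sp_sigma h"
proof -
  define T where "T = {j. 0 < j \<and> \<bar>h j\<bar> \<in> neg_set f}"
  have "bij_betw (\<lambda>j. \<bar>h j\<bar>) T (neg_set f)"
    unfolding T_def using assms(2) by (rule bij_betw_abs_preimage) (auto simp: neg_set_def)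
  then have "finite T" "card T = card (neg_set f)"
    using assms(3) bij_betw_finite bij_betw_same_card by blast+
  then show ?thesis
    using neg_one_power_card_sym_diff[of "neg_set h" T] assms
    by (simp add: sp_sigma_def neg_set_comp T_def)
qed

lemma sp_sigma_comp_W_B:
  assumes "f \<in> W_B m" "h \<in> W_B m"
  shows "sp_sigma (f \<circ> h) = sp_sigma f * sp_sigma h"
  using assms by (intro sp_sigma_comp finite_neg_set_W_B) (auto simp: W_B_iff)

lemma sp_sigma_cases: "sp_sigma f = 1 \<or> sp_sigma f = -1"
  unfolding sp_sigma_def by (metis neg_one_even_power neg_one_odd_power)

lemma sp_sigma_id: "sp_sigma id = 1"
proof -
  have "neg_set id = {}"
    by (auto simp: neg_set_def)
  then show ?thesis
    by (simp add: sp_sigma_def)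
qed

lemma c_c: "c j \<circ> c j = id"
  by (auto simp: c_def fun_eq_iff)

lemma bij_c: "bij (c j)"
  by (rule o_bij[OF c_c c_c])

lemma c_W_B: "0 < j \<Longrightarrow> j \<le> int m \<Longrightarrow> c j \<in> W_B m"
  unfolding W_B_iff signed_perm_def using bij_c[of j] by (auto simp: c_def)

lemma sp_sigma_c: "0 < j \<Longrightarrow> sp_sigma (c j) = -1"
proof -
  assume "0 < j"
  then have "neg_set (c j) = {j}"
    by (auto simp: neg_set_def c_def)
  then show ?thesis
    by (simp add: sp_sigma_def)
qed

lemma c_comm_W_B:
  assumes "f \<in> W_B m" "int m < j"
  shows "c j \<circ> f = f \<circ> c j"
proof
  fix x
  have fix_pm: "f j = j" "f (- j) = - j"
    using assms by (auto simp: W_B_iff)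
  have "inj f"
    using assms(1) by (simp add: W_B_iff signed_perm_def bij_is_inj)
  then have "f x = j \<longleftrightarrow> x = j" "f x = - j \<longleftrightarrow> x = - j"
    using fix_pm by (metis injD)+
  then show "(c j \<circ> f) x = (f \<circ> c j) x"
    using fix_pm by (auto simp: c_def)
qed

definition W_D_lift :: "int \<Rightarrow> (int \<Rightarrow> int) \<Rightarrow> int \<Rightarrow> int" where
  "W_D_lift j f = (if sp_sigma f = -1 then c j \<circ> f else f)"

lemma W_D_lift_W_D:
  assumes "f \<in> W_B m"
  shows "W_D_lift (int m + 1) f \<in> W_D (Suc m)"
proof (cases "sp_sigma f = -1")
  case True
  have f: "f \<in> W_B (Suc m)"
    using assms W_B_mono[of m "Suc m"] by auto
  moreover have c: "c (int m + 1) \<in> W_B (Suc m)"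
    by (rule c_W_B) auto
  ultimately have "sp_sigma (c (int m + 1) \<circ> f) = 1"
    using True sp_sigma_comp_W_B sp_sigma_c[of "int m + 1"] by simp
  then show ?thesis
    using True W_B_comp[OF c f] by (simp add: W_D_lift_def W_D_def)
next
  case False
  then show ?thesis
    using assms W_B_mono[of m "Suc m"] sp_sigma_cases[of f]
    by (auto simp: W_D_lift_def W_D_def)
qed

lemma W_D_lift_comp:
  assumes f: "f \<in> W_B m" and h: "h \<in> W_B m" and "int m < j"
  shows "W_D_lift j (f \<circ> h) = W_D_lift j f \<circ> W_D_lift j h"
proof -
  have sigma: "sp_sigma (f \<circ> h) = sp_sigma f * sp_sigma h"
    using f h by (rule sp_sigma_comp_W_B)
  have comm: "c j (f x) = f (c j x)" and cc: "c j (c j x) = x" for x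
    using c_comm_W_B[OF f \<open>int m < j\<close>] c_c[of j] by (metis comp_apply id_apply)+
  have "c j \<circ> f \<circ> (c j \<circ> h) = f \<circ> h" "c j \<circ> f \<circ> h = c j \<circ> (f \<circ> h)"
    "f \<circ> (c j \<circ> h) = c j \<circ> (f \<circ> h)"
    by (simp_all add: fun_eq_iff comm cc)
  then show ?thesis
    using sigma sp_sigma_cases[of f] sp_sigma_cases[of h] by (auto simp: W_D_lift_def)
qed

definition abs_stable :: "int set \<Rightarrow> (int \<Rightarrow> int) \<Rightarrow> bool" where
  "abs_stable Orb g \<longleftrightarrow> (\<forall>x. \<bar>x\<bar> \<in> Orb \<longrightarrow> \<bar>g x\<bar> \<in> Orb)"

definition signed_restrict :: "int set \<Rightarrow> (int \<Rightarrow> int) \<Rightarrow> int \<Rightarrow> int" where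
  "signed_restrict Orb g = (\<lambda>x. if \<bar>x\<bar> \<in> Orb then g x else x)"

lemma abs_stable_orbit:
  assumes G: "group_of_funs G" "\<forall>g\<in>G. signed_perm g" and "h \<in> G"
  shows "abs_stable {pr g j | g. g \<in> G} h"
  unfolding abs_stable_def
proof (intro allI impI)
  fix x assume "\<bar>x\<bar> \<in> {pr g j | g. g \<in> G}"
  then obtain k where k: "k \<in> G" "\<bar>x\<bar> = \<bar>k j\<bar>"
    by (auto simp: pr_def)
  then have "x = k j \<or> x = - k j"
    by arith
  then have "\<bar>h x\<bar> = pr (h \<circ> k) j"
    using G(2) \<open>h \<in> G\<close> by (auto simp: pr_def signed_perm_odd)
  moreover have "h \<circ> k \<in> G"
    using G(1) \<open>h \<in> G\<close> k(1) by (simp add: group_of_funs_def)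
  ultimately show "\<bar>h x\<bar> \<in> {pr g j | g. g \<in> G}"
    by blast
qed

lemma tau_cycle_subset_iff:
  assumes "abs_stable Orb g" "Orb \<subseteq> {0..}"
  shows "tau_cycle g \<bar>x\<bar> \<subseteq> Orb \<longleftrightarrow> \<bar>x\<bar> \<in> Orb"
proof
  have "\<bar>x\<bar> = (pr g ^^ 0) \<bar>x\<bar>"
    by simp
  then show "tau_cycle g \<bar>x\<bar> \<subseteq> Orb \<Longrightarrow> \<bar>x\<bar> \<in> Orb"
    unfolding tau_cycle_def by blast
next
  assume x: "\<bar>x\<bar> \<in> Orb"
  have "(pr g ^^ k) \<bar>x\<bar> \<in> Orb" for k
  proof (induction k)
    case (Suc k)
    then have "\<bar>(pr g ^^ k) \<bar>x\<bar>\<bar> \<in> Orb"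
      using assms(2) by force
    then show ?case
      using assms(1) by (simp add: abs_stable_def pr_def)
  qed (simp add: x)
  then show "tau_cycle g \<bar>x\<bar> \<subseteq> Orb"
    unfolding tau_cycle_def by blast
qed

lemma g_O_eq_signed_restrict:
  assumes "abs_stable Orb g" "Orb \<subseteq> {0..}"
  shows "g_O Orb g = signed_restrict Orb g"
  using tau_cycle_subset_iff[OF assms] by (simp add: g_O_def signed_restrict_def)

lemma signed_restrict_id: "signed_restrict Orb id = id"
  by (auto simp: signed_restrict_def)

lemma signed_restrict_comp:
  assumes "abs_stable Orb h"
  shows "signed_restrict Orb (g \<circ> h) = signed_restrict Orb g \<circ> signed_restrict Orb h"
  using assms by (auto simp: signed_restrict_def abs_stable_def)

lemma signed_restrict_W_B:
  assumes g: "signed_perm g" "abs_stable Orb g" "abs_stable Orb (inv g)"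
    and "Orb \<subseteq> {0 .. int m}"
  shows "signed_restrict Orb g \<in> W_B m"
proof -
  have "g \<circ> inv g = id" "inv g \<circ> g = id"
    using g(1) by (simp_all add: signed_perm_def bij_is_inj bij_is_surj flip: surj_iff inj_iff)
  then have "signed_restrict Orb g \<circ> signed_restrict Orb (inv g) = id"
    "signed_restrict Orb (inv g) \<circ> signed_restrict Orb g = id"
    using g(2,3) by (simp_all flip: signed_restrict_comp add: signed_restrict_id)
  then have "bij (signed_restrict Orb g)"
    by (intro o_bij)
  moreover have "signed_restrict Orb g (- x) = - signed_restrict Orb g x" for x
    using g(1) by (simp add: signed_restrict_def signed_perm_odd)
  moreover have "signed_restrict Orb g x = x" if "int m < \<bar>x\<bar>" for x
    using that assms(4) by (auto simp: signed_restrict_def)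
  ultimately show ?thesis
    by (simp add: W_B_iff signed_perm_def)
qed

lemma group_of_funs_image:
  assumes G: "group_of_funs G" "\<forall>g\<in>G. bij g"
    and \<phi>: "\<phi> id = id" "\<forall>g\<in>G. \<forall>h\<in>G. \<phi> (g \<circ> h) = \<phi> g \<circ> \<phi> h"
  shows "group_of_funs (\<phi> ` G)"
  unfolding group_of_funs_def
proof (intro conjI ballI)
  show "id \<in> \<phi> ` G"
    using G(1) \<phi>(1) by (metis group_of_funs_def image_eqI)
next
  fix f1 f2 assume "f1 \<in> \<phi> ` G" "f2 \<in> \<phi> ` G"
  then obtain g h where "g \<in> G" "h \<in> G" "f1 = \<phi> g" "f2 = \<phi> h"
    by blast
  then have "f1 \<circ> f2 = \<phi> (g \<circ> h)"
    using \<phi>(2) by simp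
  moreover have "g \<circ> h \<in> G"
    using G(1) \<open>g \<in> G\<close> \<open>h \<in> G\<close> by (simp add: group_of_funs_def)
  ultimately show "f1 \<circ> f2 \<in> \<phi> ` G"
    by (metis image_eqI)
next
  fix f assume "f \<in> \<phi> ` G"
  then obtain g where g: "g \<in> G" "f = \<phi> g"
    by blast
  then have "inv g \<in> G" "g \<circ> inv g = id" "inv g \<circ> g = id"
    using G by (auto simp: group_of_funs_def bij_is_inj bij_is_surj simp flip: surj_iff inj_iff)
  then have "\<phi> g \<circ> \<phi> (inv g) = id" "\<phi> (inv g) \<circ> \<phi> g = id"
    using g(1) \<phi> by metis+
  then have "inv f = \<phi> (inv g)"
    unfolding g(2) by (rule inv_unique_comp)
  then show "inv f \<in> \<phi> ` G"
    using \<open>inv g \<in> G\<close> by simp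
qed

theorem lemma6p1:
  fixes n n' :: nat and G :: "(int \<Rightarrow> int) set"
  assumes "G \<subseteq> W_D n" and "group_of_funs G"
    and "H1_condition n G" and "relatively_minimal n G" and "minimality_condition n G"
    and "n' \<ge> 1" and "{pr g 1 | g. g \<in> G} = {1 .. int n'}"
  shows "group_of_funs (P_O n' ` G) \<and> P_O n' ` G \<subseteq> W_D (Suc n')
         \<and> (\<forall>g\<in>G. \<forall>h\<in>G. P_O n' (g \<circ> h) = P_O n' g \<circ> P_O n' h)"
proof -
  \<comment> \<open>Only the fact that {1..n'} is a pr(G)-orbit is used.\<close>
  define Orb where "Orb = {1 .. int n'}"
  have perm: "\<forall>g\<in>G. signed_perm g"
    using assms(1) by (auto simp: W_D_def W_B_iff)
  have stable: "abs_stable Orb g" if "g \<in> G" for g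
    using abs_stable_orbit[OF assms(2) perm that, of 1] assms(7) by (simp add: Orb_def)
  have restrict_W_B: "signed_restrict Orb g \<in> W_B n'" if "g \<in> G" for g
    using that assms(2)
    by (intro signed_restrict_W_B stable) (auto simp: group_of_funs_def Orb_def perm)
  have P_O_eq: "P_O n' g = W_D_lift (int n' + 1) (signed_restrict Orb g)" if "g \<in> G" for g
    using g_O_eq_signed_restrict[OF stable[OF that]]
    by (simp add: P_O_def W_D_lift_def Orb_def)
  have "\<forall>g\<in>G. \<forall>h\<in>G. P_O n' (g \<circ> h) = P_O n' g \<circ> P_O n' h"
    using assms(2) by (auto simp: P_O_eq group_of_funs_def signed_restrict_comp stable
        intro: W_D_lift_comp restrict_W_B)
  moreover have "P_O n' ` G \<subseteq> W_D (Suc n')"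
    using P_O_eq W_D_lift_W_D restrict_W_B by auto
  moreover have "P_O n' id = id"
    using assms(2)
    by (simp add: P_O_eq group_of_funs_def signed_restrict_id W_D_lift_def sp_sigma_id)
  ultimately show ?thesis
    using group_of_funs_image[OF assms(2)] perm by (auto simp: signed_perm_def)
qed

end
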